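(* Let $V$ be a finite set of variables, let $D_{\mathit{dag}}$ be the ABA framework defined in the context, and let $\sigma\in\{\text{preferred},\text{stable}\}$. Then each directed acyclic graph $G$ with node set $V$ corresponds to a unique $S\in\sigma(D_{\mathit{dag}})$ and vice versa, where $S$ corresponds to the graph $(V,\{(x,y)\mid \mathit{arr}_{xy}\in S\})$.
   Context: Assumption-based argumentation (ABA). An ABA framework is a tuple $D=(\mathcal L,\mathcal R,\mathcal A,\overline{\cdot})$ with sentences $\mathcal L$, rules $\mathcal R$ of the form $a_0\leftarrow a_1,\dots,a_n$ ($n\ge0$), assumptions $\mathcal A\subseteq\mathcal L$ and contrary function $\overline{\cdot}:\mathcal A\to\mathcal L$. For $S\subseteq\mathcal A$, $S\vdash q$ if there is a finite rooted labelled tree with root $q$, set of leaf labels $S$ or $S\cup\{\top\}$, and every inner node labelled by the head of some rule whose children are labelled by the distinct body elements of that rule (a single child $\top$ for an empty body). $S$ attacks $T$ if some $S'\subseteq S$ derives $\overline a$ for some $a\in T$. $S$ is conflict-free if it does not attack itself; it defends $T$ if it attacks every attacker of $T$; admissible if conflict-free and self-defending; complete if admissible and contains every assumption set it defends; preferred if $\subseteq$-maximal complete; stable if admissible and it attacks $\{a\}$ for every assumption $a\notin S$. The framework $D_{\mathit{dag}}$: for a finite set $V$, assumptions are $\mathit{arr}_{xy}$ for all ordered pairs $x\ne y$ in $V$ and one assumption $\mathit{noe}_{xy}=\mathit{noe}_{yx}$ per unordered pair of distinct variables; each assumption $a$ has its own distinct fresh contrary $\overline a$; rules are (i) $\overline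 a\leftarrow b$ for all distinct $a,b\in\{\mathit{arr}_{xy},\mathit{arr}_{yx},\mathit{noe}_{xy}\}$; (ii) for every sequence $x_1\dots x_k$ of variables with consecutive elements distinct and $x_1=x_k$, and every $1\le i<k$, the rule $\overline{\mathit{arr}_{x_ix_{i+1}}}\leftarrow\mathit{arr}_{x_1x_2},\dots,\mathit{arr}_{x_{k-1}x_k}$. *)

theory Defs
  imports Main
begin

text \<open>A rule a0 <- a1,...,an is represented as the pair (a0, {a1,...,an}).\<close>
type_synonym 'l rule = "'l \<times> 'l set"

record 'l aba =
  lang  :: "'l set"
  rules :: "'l rule set"
  asms  :: "'l set"
  contr :: "'l \<Rightarrow> 'l"

text \<open>Finite rooted labelled trees; Top is the special label for empty rule bodies.\<close>
datatype 'l dtree = Top | Nd 'l "'l dtree list"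

fun root :: "'l dtree \<Rightarrow> 'l option" where
  "root Top = None"
| "root (Nd a _) = Some a"

fun leaves :: "'l dtree \<Rightarrow> 'l set" where
  "leaves Top = {}"
| "leaves (Nd a []) = {a}"
| "leaves (Nd a (t # ts)) = (\<Union>c\<in>set (t # ts). leaves c)"

fun valid_tree :: "'l rule set \<Rightarrow> 'l dtree \<Rightarrow> bool" where
  "valid_tree R Top = True"
| "valid_tree R (Nd a []) = True"
| "valid_tree R (Nd a (t # ts)) =
     ((t = Top \<and> ts = [] \<and> (a, {}) \<in> R) \<or>
      (\<exists>B. (a, B) \<in> R \<and> B \<noteq> {} \<and> distinct (map root (t # ts))
           \<and> set (map root (t # ts)) = Some ` B
           \<and> (\<forall>c\<in>set (t # ts). valid_tree R c)))"

definition derives :: "'l aba \<Rightarrow> 'l set \<Rightarrow> 'l \<Rightarrow> bool" where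
  "derives D S q \<longleftrightarrow> (\<exists>t. valid_tree (rules D) t \<and> root t = Some q \<and> leaves t = S)"

definition attacks :: "'l aba \<Rightarrow> 'l set \<Rightarrow> 'l set \<Rightarrow> bool" where
  "attacks D S T \<longleftrightarrow> (\<exists>S'\<subseteq>S. \<exists>a\<in>T. derives D S' (contr D a))"

definition conflict_free :: "'l aba \<Rightarrow> 'l set \<Rightarrow> bool" where
  "conflict_free D S \<longleftrightarrow> \<not> attacks D S S"

definition defends :: "'l aba \<Rightarrow> 'l set \<Rightarrow> 'l set \<Rightarrow> bool" where
  "defends D S T \<longleftrightarrow> (\<forall>U\<subseteq>asms D. attacks D U T \<longrightarrow> attacks D S U)"

definition admissible :: "'l aba \<Rightarrow> 'l set \<Rightarrow> bool" where
  "admissible D S \<longleftrightarrow> S \<subseteq> asms D \<and> conflict_free D S \<and> defends D S S"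

definition complete :: "'l aba \<Rightarrow> 'l set \<Rightarrow> bool" where
  "complete D S \<longleftrightarrow> admissible D S \<and> (\<forall>T\<subseteq>asms D. defends D S T \<longrightarrow> T \<subseteq> S)"

definition preferred :: "'l aba \<Rightarrow> 'l set \<Rightarrow> bool" where
  "preferred D S \<longleftrightarrow> complete D S \<and> \<not> (\<exists>S'. complete D S' \<and> S \<subset> S')"

definition stable :: "'l aba \<Rightarrow> 'l set \<Rightarrow> bool" where
  "stable D S \<longleftrightarrow> admissible D S \<and> (\<forall>a\<in>asms D - S. attacks D S {a})"

text \<open>noe_xy = noe_yx is represented by the unordered pair {x,y}.\<close>
datatype 'v dag_asm = Arr 'v 'v | Noe "'v set"

text \<open>Sentences: assumptions and their (distinct, fresh) contraries.\<close>
datatype 'v dag_sent = As "'v dag_asm" | Ct "'v dag_asm"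

definition dag_asms :: "'v set \<Rightarrow> 'v dag_asm set" where
  "dag_asms V = {Arr x y | x y. x \<in> V \<and> y \<in> V \<and> x \<noteq> y}
              \<union> {Noe {x, y} | x y. x \<in> V \<and> y \<in> V \<and> x \<noteq> y}"

definition dag_rules :: "'v set \<Rightarrow> 'v dag_sent rule set" where
  "dag_rules V =
     {(Ct a, {As b}) | a b x y. x \<in> V \<and> y \<in> V \<and> x \<noteq> y
         \<and> a \<in> {Arr x y, Arr y x, Noe {x, y}} \<and> b \<in> {Arr x y, Arr y x, Noe {x, y}} \<and> a \<noteq> b}
   \<union> {(Ct (Arr (xs ! i) (xs ! (i + 1))),
        {As (Arr (xs ! j) (xs ! (j + 1))) | j. j + 1 < length xs}) | xs i.
         set xs \<subseteq> V \<and> 2 \<le> length xs \<and> hd xs = last xs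
         \<and> (\<forall>j. j + 1 < length xs \<longrightarrow> xs ! j \<noteq> xs ! (j + 1))
         \<and> i + 1 < length xs}"

definition D_dag :: "'v set \<Rightarrow> 'v dag_sent aba" where
  "D_dag V = \<lparr> lang = As ` dag_asms V \<union> Ct ` dag_asms V,
               rules = dag_rules V,
               asms = As ` dag_asms V,
               contr = (\<lambda>s. case s of As a \<Rightarrow> Ct a | Ct a \<Rightarrow> Ct a) \<rparr>"

definition graph_of :: "'v dag_sent set \<Rightarrow> ('v \<times> 'v) set" where
  "graph_of S = {(x, y). As (Arr x y) \<in> S}"

end

theory Submission
  imports Defs
begin

text \<open>D_dag is flat and all rule bodies consist of assumptions, so an attack is a single rule
  application. Hence a set S of assumptions is conflict-free iff it takes at most one of
  arr_xy, arr_yx, noe_xy for every pair and the arrows in S close no cycle, i.e. graph_of S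
  is acyclic; and S attacks every assumption outside it iff it takes at least one per pair.
  So the stable sets are exactly the sets obtained from a DAG by taking its arrows and
  noe_xy for every non-adjacent pair. The same construction extends any conflict-free set to a
  stable one, which is why preferred and stable sets coincide.\<close>

section \<open>Stable and preferred assumption sets in general frameworks\<close>

lemma defends_self_if_attacks_rest:
  assumes "conflict_free D S" "\<forall>a\<in>asms D - S. attacks D S {a}"
  shows "defends D S S"
  unfolding defends_def
proof (intro allI impI)
  fix U assume U: "U \<subseteq> asms D" "attacks D U S"
  then obtain B t where B: "B \<subseteq> U" "t \<in> S" "derives D B (contr D t)"
    unfolding attacks_def by blast
  show "attacks D S U"
  proof (cases "B \<subseteq> S")
    case True
    then show ?thesis using assms(1) B unfolding conflict_free_def attacks_def by blast
  next
    case False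
    then obtain u where "u \<in> B" "u \<notin> S" by blast
    then have "attacks D S {u}" using assms(2) U B by blast
    then show ?thesis using \<open>u \<in> B\<close> B(1) unfolding attacks_def by blast
  qed
qed

lemma stable_iff_conflict_free:
  "stable D S \<longleftrightarrow> S \<subseteq> asms D \<and> conflict_free D S \<and> (\<forall>a\<in>asms D - S. attacks D S {a})"
  using defends_self_if_attacks_rest unfolding stable_def admissible_def by blast

lemma stable_imp_complete:
  assumes "stable D S"
  shows "complete D S"
  unfolding complete_def
proof (intro conjI allI impI subsetI)
  show "admissible D S" using assms unfolding stable_def by blast
  fix T a assume T: "T \<subseteq> asms D" "defends D S T" and "a \<in> T"
  show "a \<in> S"
  proof (rule ccontr)
    assume "a \<notin> S"
    then have "attacks D S {a}" using assms T \<open>a \<in> T\<close> unfolding stable_def by blast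
    then obtain B where B: "B \<subseteq> S" "derives D B (contr D a)" unfolding attacks_def by blast
    have "B \<subseteq> asms D" using B(1) assms unfolding stable_def admissible_def by blast
    moreover have "attacks D B T" using B \<open>a \<in> T\<close> unfolding attacks_def by blast
    ultimately have "attacks D S B" using T unfolding defends_def by blast
    then have "attacks D S S" using B(1) unfolding attacks_def by blast
    then show False using assms unfolding stable_def admissible_def conflict_free_def by blast
  qed
qed

lemma stable_imp_preferred:
  assumes "stable D S"
  shows "preferred D S"
  unfolding preferred_def
proof (intro conjI notI)
  show "complete D S" using assms by (rule stable_imp_complete)
  assume "\<exists>S'. complete D S' \<and> S \<subset> S'"
  then obtain S' a where S': "complete D S'" "S \<subset> S'" "a \<in> S'" "a \<notin> S" by blast
  then have "a \<in> asms D" unfolding complete_def admissible_def by blast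
  then have "attacks D S {a}" using assms S' unfolding stable_def by blast
  then have "attacks D S' S'" using S' unfolding attacks_def by blast
  then show False using S'(1) unfolding complete_def admissible_def conflict_free_def by blast
qed

definition flat_with_assumption_bodies :: "'l aba \<Rightarrow> bool" where
  "flat_with_assumption_bodies D \<longleftrightarrow>
     (\<forall>(h, B) \<in> rules D. h \<notin> asms D \<and> finite B \<and> B \<noteq> {} \<and> B \<subseteq> asms D)"

lemma flat_with_assumption_bodiesD:
  assumes "flat_with_assumption_bodies D" "(h, B) \<in> rules D"
  shows "h \<notin> asms D" "finite B" "B \<noteq> {}" "B \<subseteq> asms D"
  using assms unfolding flat_with_assumption_bodies_def by auto

lemma valid_tree_asm_root_leaf:
  assumes "flat_with_assumption_bodies D" "valid_tree (rules D) t" "root t = Some a" "a \<in> asms D"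
  shows "t = Nd a []"
proof -
  obtain cs where t: "t = Nd a cs" using assms(3) by (cases t) auto
  have "\<not> (\<exists>B. (a, B) \<in> rules D)"
    using flat_with_assumption_bodiesD(1)[OF assms(1)] assms(4) by blast
  then show ?thesis using assms(2) t by (cases cs) auto
qed

lemma derives_flat_iff:
  assumes flat: "flat_with_assumption_bodies D" and "S \<subseteq> asms D" "q \<notin> asms D"
  shows "derives D S q \<longleftrightarrow> (q, S) \<in> rules D"
proof
  assume "derives D S q"
  then obtain t where t: "valid_tree (rules D) t" "root t = Some q" "leaves t = S"
    unfolding derives_def by blast
  then obtain cs where tc: "t = Nd q cs" by (cases t) auto
  obtain c cs' where cs: "cs = c # cs'"
    using t(3) tc assms(2,3) by (cases cs) auto
  have "(q, {}) \<notin> rules D" using flat_with_assumption_bodiesD(3)[OF flat] by blast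
  then obtain B where B: "(q, B) \<in> rules D" "set (map root cs) = Some ` B"
      "\<forall>d\<in>set cs. valid_tree (rules D) d"
    using t(1) tc cs by auto
  have "B \<subseteq> asms D" using flat_with_assumption_bodiesD(4)[OF flat B(1)] .
  have leaf: "leaves d = the ` {root d}" if "d \<in> set cs" for d
  proof -
    have "root d \<in> Some ` B" using B(2) that by auto
    then obtain b where b: "root d = Some b" "b \<in> asms D"
      using \<open>B \<subseteq> asms D\<close> by blast
    then have "d = Nd b []" using valid_tree_asm_root_leaf[OF flat] B(3) that by blast
    then show ?thesis using b by simp
  qed
  have "leaves t = (\<Union>d\<in>set cs. leaves d)" using tc cs by simp
  also have "\<dots> = (\<Union>d\<in>set cs. the ` {root d})" using leaf by auto
  also have "\<dots> = the ` root ` set cs" by auto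
  also have "\<dots> = B" using B(2) by (simp add: image_image)
  finally show "(q, S) \<in> rules D" using t(3) B(1) by simp
next
  assume r: "(q, S) \<in> rules D"
  then have "finite S" "S \<noteq> {}" using flat_with_assumption_bodiesD[OF flat] by blast+
  then obtain l where l: "set l = S" "distinct l" using finite_distinct_list by blast
  then obtain b l' where bl: "l = b # l'" using \<open>S \<noteq> {}\<close> by (cases l) auto
  let ?t = "Nd q (map (\<lambda>b. Nd b []) l)"
  have "valid_tree (rules D) ?t" using r l bl \<open>S \<noteq> {}\<close> by (auto simp: comp_def distinct_map)
  moreover have "leaves ?t = S" using l bl by auto
  ultimately show "derives D S q" unfolding derives_def by force
qed

section \<open>Closed walks and acyclicity\<close>

lemma walk_imp_trancl:
  "successively (\<lambda>u v. (u, v) \<in> E) (x # xs) \<Longrightarrow> xs \<noteq> [] \<Longrightarrow> (x, last xs) \<in> E\<^sup>+"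
proof (induction xs arbitrary: x)
  case (Cons y ys)
  then have "(x, y) \<in> E" "successively (\<lambda>u v. (u, v) \<in> E) (y # ys)" by simp_all
  show ?case
  proof (cases "ys = []")
    case True
    then show ?thesis using \<open>(x, y) \<in> E\<close> by auto
  next
    case False
    then have "(y, last ys) \<in> E\<^sup>+" using Cons.IH \<open>successively _ (y # ys)\<close> by blast
    then show ?thesis using \<open>(x, y) \<in> E\<close> False by (simp add: trancl_into_trancl2)
  qed
qed simp

lemma trancl_iff_walk:
  "(x, y) \<in> E\<^sup>+ \<longleftrightarrow>
     (\<exists>xs. successively (\<lambda>u v. (u, v) \<in> E) xs \<and> 2 \<le> length xs \<and> hd xs = x \<and> last xs = y)"
proof
  assume "(x, y) \<in> E\<^sup>+"
  then show "\<exists>xs. successively (\<lambda>u v. (u, v) \<in> E) xs \<and> 2 \<le> length xs \<and> hd xs = x \<and> last xs = y"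
  proof (induction rule: converse_trancl_induct)
    case (base x)
    then show ?case by (intro exI[of _ "[x, y]"]) simp
  next
    case (step x z)
    then obtain zs where "successively (\<lambda>u v. (u, v) \<in> E) zs" "2 \<le> length zs"
        "hd zs = z" "last zs = y"
      by blast
    moreover from this obtain z' zs' where "zs = z' # zs'" by (cases zs) auto
    ultimately show ?case using step(1) by (intro exI[of _ "x # zs"]) auto
  qed
next
  assume "\<exists>xs. successively (\<lambda>u v. (u, v) \<in> E) xs \<and> 2 \<le> length xs \<and> hd xs = x \<and> last xs = y"
  then obtain xs where xs: "successively (\<lambda>u v. (u, v) \<in> E) xs" "2 \<le> length xs"
      "hd xs = x" "last xs = y"
    by blast
  then obtain xs' where xs': "xs = x # xs'" by (cases xs) auto
  have "xs' \<noteq> []" using xs(2) xs' by auto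
  moreover have "successively (\<lambda>u v. (u, v) \<in> E) (x # xs')" using xs(1) xs' by simp
  ultimately have "(x, last xs') \<in> E\<^sup>+" by (rule walk_imp_trancl[rotated])
  then show "(x, y) \<in> E\<^sup>+" using xs(4) xs' \<open>xs' \<noteq> []\<close> by simp
qed

lemma acyclic_iff_no_closed_walk:
  "acyclic E \<longleftrightarrow>
     \<not> (\<exists>xs. successively (\<lambda>u v. (u, v) \<in> E) xs \<and> 2 \<le> length xs \<and> hd xs = last xs)"
  unfolding acyclic_def trancl_iff_walk by auto

lemma walk_in_Field:
  "successively (\<lambda>u v. (u, v) \<in> E) (x # y # ys) \<Longrightarrow> set (x # y # ys) \<subseteq> Field E"
proof (induction ys arbitrary: x y)
  case Nil
  then show ?case by (simp add: FieldI1 FieldI2)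
next
  case (Cons z zs)
  then have "(x, y) \<in> E" "successively (\<lambda>u v. (u, v) \<in> E) (y # z # zs)" by simp_all
  moreover from this(2) have "set (y # z # zs) \<subseteq> Field E" by (rule Cons.IH)
  ultimately show ?case by (simp add: FieldI1)
qed

section \<open>The framework D_dag\<close>

definition pair_asms :: "'v \<Rightarrow> 'v \<Rightarrow> 'v dag_asm set" where
  "pair_asms x y = {Arr x y, Arr y x, Noe {x, y}}"

text \<open>The sequences x_1 ... x_k of rule (ii), and the common body of their rules.\<close>

definition dag_cycle :: "'v set \<Rightarrow> 'v list \<Rightarrow> bool" where
  "dag_cycle V xs \<longleftrightarrow> set xs \<subseteq> V \<and> 2 \<le> length xs \<and> hd xs = last xs \<and> distinct_adj xs"

definition cycle_arrows :: "'v list \<Rightarrow> 'v dag_sent set" where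
  "cycle_arrows xs = {As (Arr (xs ! j) (xs ! (j + 1))) | j. j + 1 < length xs}"

lemma dag_asms_iff: "a \<in> dag_asms V \<longleftrightarrow> (\<exists>x\<in>V. \<exists>y\<in>V. x \<noteq> y \<and> a \<in> pair_asms x y)"
  unfolding dag_asms_def pair_asms_def by auto

lemma Arr_in_dag_asms_iff [simp]: "Arr x y \<in> dag_asms V \<longleftrightarrow> x \<in> V \<and> y \<in> V \<and> x \<noteq> y"
  unfolding dag_asms_def by auto

lemma pair_asms_eq_if_Noe_mem: "Noe {x, y} \<in> pair_asms u v \<Longrightarrow> pair_asms u v = pair_asms x y"
  unfolding pair_asms_def by (auto simp: doubleton_eq_iff)

lemma dag_rulesE:
  assumes "(h, B) \<in> dag_rules V"
  obtains (exclusion) a b x y where "h = Ct a" "B = {As b}" "x \<in> V" "y \<in> V" "x \<noteq> y"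
      "a \<in> pair_asms x y" "b \<in> pair_asms x y" "a \<noteq> b"
    | (cycle) xs i where "h = Ct (Arr (xs ! i) (xs ! (i + 1)))" "B = cycle_arrows xs"
      "dag_cycle V xs" "i + 1 < length xs"
  using assms unfolding dag_rules_def pair_asms_def dag_cycle_def cycle_arrows_def
    distinct_adj_conv_nth Suc_eq_plus1
  by blast

lemma dag_rules_exclusionI:
  "x \<in> V \<Longrightarrow> y \<in> V \<Longrightarrow> x \<noteq> y \<Longrightarrow> a \<in> pair_asms x y \<Longrightarrow> b \<in> pair_asms x y \<Longrightarrow> a \<noteq> b
   \<Longrightarrow> (Ct a, {As b}) \<in> dag_rules V"
  unfolding dag_rules_def pair_asms_def by blast

lemma dag_rules_cycleI:
  "dag_cycle V xs \<Longrightarrow> i + 1 < length xs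
   \<Longrightarrow> (Ct (Arr (xs ! i) (xs ! (i + 1))), cycle_arrows xs) \<in> dag_rules V"
  unfolding dag_rules_def dag_cycle_def cycle_arrows_def distinct_adj_conv_nth Suc_eq_plus1
  by blast

lemma asms_D_dag [simp]: "asms (D_dag V) = As ` dag_asms V"
  and rules_D_dag [simp]: "rules (D_dag V) = dag_rules V"
  and contr_D_dag_As [simp]: "contr (D_dag V) (As a) = Ct a"
  unfolding D_dag_def by simp_all

lemma Ct_notin_As_image [simp]: "Ct a \<notin> As ` A"
  by blast

lemma As_in_As_image [simp]: "As a \<in> As ` A \<longleftrightarrow> a \<in> A"
  by blast

lemma cycle_arrows_subset_dag_asms:
  assumes "dag_cycle V xs"
  shows "cycle_arrows xs \<subseteq> As ` dag_asms V"
proof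
  fix s assume "s \<in> cycle_arrows xs"
  then obtain j where j: "s = As (Arr (xs ! j) (xs ! (j + 1)))" "j + 1 < length xs"
    unfolding cycle_arrows_def by blast
  then have "xs ! j \<in> V" "xs ! (j + 1) \<in> V" "xs ! j \<noteq> xs ! (j + 1)"
    using assms unfolding dag_cycle_def distinct_adj_conv_nth by auto
  then show "s \<in> As ` dag_asms V" using j(1) by simp
qed

lemma dag_rule_shape:
  assumes "(h, B) \<in> dag_rules V"
  shows "h \<notin> As ` dag_asms V \<and> finite B \<and> B \<noteq> {} \<and> B \<subseteq> As ` dag_asms V"
  using assms
proof (cases rule: dag_rulesE)
  case (exclusion a b x y)
  then have "b \<in> dag_asms V" using dag_asms_iff by blast
  then show ?thesis using exclusion(1,2) by simp
next
  case (cycle xs i)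
  have "cycle_arrows xs = (\<lambda>j. As (Arr (xs ! j) (xs ! (j + 1)))) ` {j. j + 1 < length xs}"
    unfolding cycle_arrows_def by blast
  moreover have "finite {j. j + 1 < length xs}"
    by (rule finite_subset[of _ "{..<length xs}"]) auto
  ultimately have "finite B" using cycle(2) by simp
  moreover have "B \<noteq> {}" using cycle(2,4) unfolding cycle_arrows_def by blast
  ultimately show ?thesis using cycle(1,2) cycle_arrows_subset_dag_asms[OF cycle(3)] by simp
qed

lemma flat_with_assumption_bodies_D_dag: "flat_with_assumption_bodies (D_dag V)"
  unfolding flat_with_assumption_bodies_def using dag_rule_shape by fastforce

lemma attacks_D_dag_iff:
  assumes "S \<subseteq> asms (D_dag V)" "T \<subseteq> range As"
  shows "attacks (D_dag V) S T \<longleftrightarrow> (\<exists>B\<subseteq>S. \<exists>a. As a \<in> T \<and> (Ct a, B) \<in> dag_rules V)"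
proof -
  have derives: "derives (D_dag V) B (Ct a) \<longleftrightarrow> (Ct a, B) \<in> dag_rules V" if "B \<subseteq> S" for B a
  proof -
    have "B \<subseteq> asms (D_dag V)" using that assms(1) by blast
    then show ?thesis
      using derives_flat_iff[OF flat_with_assumption_bodies_D_dag, where S = B and q = "Ct a"]
      by simp
  qed
  show ?thesis
  proof
    assume "attacks (D_dag V) S T"
    then obtain B t where "B \<subseteq> S" "t \<in> T" "derives (D_dag V) B (contr (D_dag V) t)"
      unfolding attacks_def by blast
    moreover obtain a where "t = As a" using \<open>t \<in> T\<close> assms(2) by blast
    ultimately show "\<exists>B\<subseteq>S. \<exists>a. As a \<in> T \<and> (Ct a, B) \<in> dag_rules V"
      using derives by (metis contr_D_dag_As)
  next
    assume "\<exists>B\<subseteq>S. \<exists>a. As a \<in> T \<and> (Ct a, B) \<in> dag_rules V"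
    then obtain B a where B: "B \<subseteq> S" "As a \<in> T" "(Ct a, B) \<in> dag_rules V" by blast
    then have "derives (D_dag V) B (contr (D_dag V) (As a))" using derives by simp
    then show "attacks (D_dag V) S T" unfolding attacks_def using B(1,2) by blast
  qed
qed

definition at_most_one_per_pair :: "'v set \<Rightarrow> 'v dag_sent set \<Rightarrow> bool" where
  "at_most_one_per_pair V S \<longleftrightarrow>
     (\<forall>x\<in>V. \<forall>y\<in>V. x \<noteq> y \<longrightarrow>
        (\<forall>a\<in>pair_asms x y. \<forall>b\<in>pair_asms x y. As a \<in> S \<longrightarrow> As b \<in> S \<longrightarrow> a = b))"

definition at_least_one_per_pair :: "'v set \<Rightarrow> 'v dag_sent set \<Rightarrow> bool" where
  "at_least_one_per_pair V S \<longleftrightarrow> (\<forall>x\<in>V. \<forall>y\<in>V. x \<noteq> y \<longrightarrow> (\<exists>a\<in>pair_asms x y. As a \<in> S))"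

lemma graph_of_offdiag:
  assumes "S \<subseteq> asms (D_dag V)" "(x, y) \<in> graph_of S"
  shows "x \<in> V" "y \<in> V" "x \<noteq> y"
  using assms unfolding graph_of_def by auto

lemma cycle_arrows_subset_iff:
  "cycle_arrows xs \<subseteq> S \<longleftrightarrow> successively (\<lambda>x y. (x, y) \<in> graph_of S) xs"
  unfolding cycle_arrows_def graph_of_def successively_conv_nth by auto

lemma dag_cycle_within_iff_not_acyclic:
  assumes "S \<subseteq> asms (D_dag V)"
  shows "(\<exists>xs. dag_cycle V xs \<and> cycle_arrows xs \<subseteq> S) \<longleftrightarrow> \<not> acyclic (graph_of S)"
proof
  assume "\<exists>xs. dag_cycle V xs \<and> cycle_arrows xs \<subseteq> S"
  then show "\<not> acyclic (graph_of S)"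
    unfolding acyclic_iff_no_closed_walk cycle_arrows_subset_iff dag_cycle_def by blast
next
  assume "\<not> acyclic (graph_of S)"
  then obtain xs where walk: "successively (\<lambda>x y. (x, y) \<in> graph_of S) xs"
      and xs: "2 \<le> length xs" "hd xs = last xs"
    unfolding acyclic_iff_no_closed_walk by blast
  then obtain x y ys where xys: "xs = x # y # ys"
    by (metis Suc_le_length_iff numeral_2_eq_2)
  have "set xs \<subseteq> V"
    using walk_in_Field[of "graph_of S" x y ys] walk graph_of_offdiag[OF assms]
    unfolding xys Field_def by blast
  moreover have "distinct_adj xs"
    using walk graph_of_offdiag(3)[OF assms] unfolding distinct_adj_def
    by (rule successively_mono) blast
  ultimately have "dag_cycle V xs" using xs unfolding dag_cycle_def by blast
  then show "\<exists>xs. dag_cycle V xs \<and> cycle_arrows xs \<subseteq> S"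
    using walk cycle_arrows_subset_iff by blast
qed

lemma conflict_free_D_dag_iff:
  assumes S: "S \<subseteq> asms (D_dag V)"
  shows "conflict_free (D_dag V) S \<longleftrightarrow> at_most_one_per_pair V S \<and> acyclic (graph_of S)"
proof -
  have "S \<subseteq> range As" using S by auto
  then have "attacks (D_dag V) S S \<longleftrightarrow> (\<exists>B\<subseteq>S. \<exists>a. As a \<in> S \<and> (Ct a, B) \<in> dag_rules V)"
    by (rule attacks_D_dag_iff[OF S])
  also have "\<dots> \<longleftrightarrow>
      \<not> at_most_one_per_pair V S \<or> (\<exists>xs. dag_cycle V xs \<and> cycle_arrows xs \<subseteq> S)"
  proof
    assume "\<exists>B\<subseteq>S. \<exists>a. As a \<in> S \<and> (Ct a, B) \<in> dag_rules V"
    then obtain B a where B: "B \<subseteq> S" "As a \<in> S" "(Ct a, B) \<in> dag_rules V" by blast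
    from B(3) show "\<not> at_most_one_per_pair V S \<or> (\<exists>xs. dag_cycle V xs \<and> cycle_arrows xs \<subseteq> S)"
    proof (cases rule: dag_rulesE)
      case (exclusion a' b x y)
      then have "As b \<in> S" "a' = a" using B(1) by auto
      then show ?thesis using exclusion B(2) unfolding at_most_one_per_pair_def by blast
    next
      case (cycle xs i)
      then show ?thesis using B(1) by blast
    qed
  next
    assume "\<not> at_most_one_per_pair V S \<or> (\<exists>xs. dag_cycle V xs \<and> cycle_arrows xs \<subseteq> S)"
    then show "\<exists>B\<subseteq>S. \<exists>a. As a \<in> S \<and> (Ct a, B) \<in> dag_rules V"
    proof
      assume "\<not> at_most_one_per_pair V S"
      then obtain x y a b where "x \<in> V" "y \<in> V" "x \<noteq> y" "a \<in> pair_asms x y" "b \<in> pair_asms x y"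
          "a \<noteq> b" "As a \<in> S" "As b \<in> S"
        unfolding at_most_one_per_pair_def by blast
      then show ?thesis using dag_rules_exclusionI[of x V y a b] by blast
    next
      assume "\<exists>xs. dag_cycle V xs \<and> cycle_arrows xs \<subseteq> S"
      then obtain xs where xs: "dag_cycle V xs" "cycle_arrows xs \<subseteq> S" by blast
      then have "0 + 1 < length xs" unfolding dag_cycle_def by simp
      then have "As (Arr (xs ! 0) (xs ! (0 + 1))) \<in> S" using xs(2) unfolding cycle_arrows_def by blast
      then show ?thesis using dag_rules_cycleI[OF xs(1) \<open>0 + 1 < length xs\<close>] xs(2) by blast
    qed
  qed
  finally show ?thesis
    unfolding conflict_free_def dag_cycle_within_iff_not_acyclic[OF S] by blast
qed

lemma attacks_rest_D_dag_iff:
  assumes S: "S \<subseteq> asms (D_dag V)"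
  shows "(\<forall>a\<in>asms (D_dag V) - S. attacks (D_dag V) S {a}) \<longleftrightarrow> at_least_one_per_pair V S"
proof
  assume attacked: "\<forall>a\<in>asms (D_dag V) - S. attacks (D_dag V) S {a}"
  show "at_least_one_per_pair V S"
    unfolding at_least_one_per_pair_def
  proof (intro ballI impI)
    fix x y assume xy: "x \<in> V" "y \<in> V" "x \<noteq> y"
    show "\<exists>a\<in>pair_asms x y. As a \<in> S"
    proof (rule ccontr)
      assume none: "\<not> (\<exists>a\<in>pair_asms x y. As a \<in> S)"
      have Noe: "Noe {x, y} \<in> pair_asms x y" unfolding pair_asms_def by simp
      then have "Noe {x, y} \<in> dag_asms V" using xy dag_asms_iff by blast
      then have "As (Noe {x, y}) \<in> asms (D_dag V) - S" using none Noe by auto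
      then have "attacks (D_dag V) S {As (Noe {x, y})}" using attacked by blast
      then obtain B where B: "B \<subseteq> S" "(Ct (Noe {x, y}), B) \<in> dag_rules V"
        using attacks_D_dag_iff[OF S] by auto
      from B(2) show False
      proof (cases rule: dag_rulesE)
        case (exclusion a b u v)
        then have "Noe {x, y} \<in> pair_asms u v" by simp
        then have "pair_asms u v = pair_asms x y" by (rule pair_asms_eq_if_Noe_mem)
        then have "b \<in> pair_asms x y" using exclusion(7) by simp
        then show False using none B(1) exclusion(2) by auto
      qed simp
    qed
  qed
next
  assume covered: "at_least_one_per_pair V S"
  show "\<forall>a\<in>asms (D_dag V) - S. attacks (D_dag V) S {a}"
  proof
    fix s assume s: "s \<in> asms (D_dag V) - S"
    then have "s \<in> As ` dag_asms V" by simp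
    then obtain a where a: "s = As a" "a \<in> dag_asms V" by blast
    from a(2) obtain x y where xy: "x \<in> V" "y \<in> V" "x \<noteq> y" "a \<in> pair_asms x y"
      unfolding dag_asms_iff by blast
    then obtain b where b: "b \<in> pair_asms x y" "As b \<in> S"
      using covered unfolding at_least_one_per_pair_def by blast
    then have "a \<noteq> b" using s a(1) by auto
    then have rule: "(Ct a, {As b}) \<in> dag_rules V" by (rule dag_rules_exclusionI[OF xy b(1)])
    have "{s} \<subseteq> range As" using a(1) by simp
    then show "attacks (D_dag V) S {s}"
      unfolding attacks_D_dag_iff[OF S \<open>{s} \<subseteq> range As\<close>] using a(1) b(2) rule
      by (intro exI[of _ "{As b}"] conjI exI[of _ a]) simp_all
  qed
qed

lemma stable_D_dag_iff:
  "stable (D_dag V) S \<longleftrightarrow> S \<subseteq> asms (D_dag V) \<and> at_most_one_per_pair V S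
     \<and> acyclic (graph_of S) \<and> at_least_one_per_pair V S"
proof (cases "S \<subseteq> asms (D_dag V)")
  case True
  then show ?thesis
    unfolding stable_iff_conflict_free conflict_free_D_dag_iff[OF True]
      attacks_rest_D_dag_iff[OF True]
    by blast
qed (simp add: stable_iff_conflict_free)

section \<open>Assumption sets of directed acyclic graphs\<close>

definition asms_of_graph :: "'v set \<Rightarrow> ('v \<times> 'v) set \<Rightarrow> 'v dag_sent set" where
  "asms_of_graph V E = {As (Arr x y) | x y. (x, y) \<in> E}
     \<union> {As (Noe {x, y}) | x y. x \<in> V \<and> y \<in> V \<and> x \<noteq> y \<and> (x, y) \<notin> E \<and> (y, x) \<notin> E}"

lemma As_Arr_in_asms_of_graph [simp]: "As (Arr x y) \<in> asms_of_graph V E \<longleftrightarrow> (x, y) \<in> E"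
  unfolding asms_of_graph_def by auto

lemma As_Noe_in_asms_of_graph:
  "As (Noe {x, y}) \<in> asms_of_graph V E \<longleftrightarrow> x \<in> V \<and> y \<in> V \<and> x \<noteq> y \<and> (x, y) \<notin> E \<and> (y, x) \<notin> E"
  unfolding asms_of_graph_def by (auto simp: doubleton_eq_iff)

lemma graph_of_asms_of_graph [simp]: "graph_of (asms_of_graph V E) = E"
  unfolding graph_of_def by simp

lemma stable_asms_of_graph:
  assumes "E \<subseteq> V \<times> V" "acyclic E"
  shows "stable (D_dag V) (asms_of_graph V E)"
proof -
  have irrefl: "(x, x) \<notin> E" for x using assms(2) unfolding acyclic_def by blast
  have asym: "(y, x) \<notin> E" if "(x, y) \<in> E" for x y
    using assms(2) that unfolding acyclic_def by (meson r_into_trancl trancl_into_trancl)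
  have "asms_of_graph V E \<subseteq> As ` dag_asms V"
  proof
    fix s assume "s \<in> asms_of_graph V E"
    then consider x y where "s = As (Arr x y)" "(x, y) \<in> E"
      | x y where "s = As (Noe {x, y})" "x \<in> V" "y \<in> V" "x \<noteq> y"
      unfolding asms_of_graph_def by blast
    then show "s \<in> As ` dag_asms V"
    proof cases
      case 1
      then show ?thesis using assms(1) irrefl by (cases "x = y") auto
    next
      case 2
      then have "Noe {x, y} \<in> dag_asms V" unfolding dag_asms_iff pair_asms_def by blast
      then show ?thesis using 2(1) by simp
    qed
  qed
  moreover have "at_most_one_per_pair V (asms_of_graph V E)"
    unfolding at_most_one_per_pair_def pair_asms_def
    by (auto simp: As_Noe_in_asms_of_graph dest: asym)
  moreover have "at_least_one_per_pair V (asms_of_graph V E)"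
    unfolding at_least_one_per_pair_def pair_asms_def
    by (auto simp: As_Noe_in_asms_of_graph)
  ultimately show ?thesis using assms(2) unfolding stable_D_dag_iff by simp
qed

lemma subset_asms_of_graph_graph_of:
  assumes "S \<subseteq> asms (D_dag V)" "at_most_one_per_pair V S"
  shows "S \<subseteq> asms_of_graph V (graph_of S)"
proof
  fix s assume "s \<in> S"
  then obtain a where a: "s = As a" "a \<in> dag_asms V" using assms(1) by auto
  from a(2) obtain x y where xy: "x \<in> V" "y \<in> V" "x \<noteq> y" "a \<in> pair_asms x y"
    unfolding dag_asms_iff by blast
  show "s \<in> asms_of_graph V (graph_of S)"
  proof (cases a)
    case (Arr u v)
    then show ?thesis using \<open>s \<in> S\<close> a(1) unfolding graph_of_def by simp
  next
    case (Noe n)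
    then have "a = Noe {x, y}" using xy(4) unfolding pair_asms_def by auto
    moreover have "Arr x y \<in> pair_asms x y" "Arr y x \<in> pair_asms x y"
      unfolding pair_asms_def by simp_all
    ultimately have "As (Arr x y) \<notin> S" "As (Arr y x) \<notin> S"
      using assms(2) xy \<open>s \<in> S\<close> a(1) unfolding at_most_one_per_pair_def by fastforce+
    then have "(x, y) \<notin> graph_of S" "(y, x) \<notin> graph_of S" unfolding graph_of_def by simp_all
    then show ?thesis
      using xy(1-3) \<open>a = Noe {x, y}\<close> a(1) by (simp add: As_Noe_in_asms_of_graph)
  qed
qed

lemma asms_of_graph_graph_of_subset:
  assumes "at_least_one_per_pair V S"
  shows "asms_of_graph V (graph_of S) \<subseteq> S"
proof
  fix s assume "s \<in> asms_of_graph V (graph_of S)"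
  then consider x y where "s = As (Arr x y)" "(x, y) \<in> graph_of S"
    | x y where "s = As (Noe {x, y})" "x \<in> V" "y \<in> V" "x \<noteq> y"
        "(x, y) \<notin> graph_of S" "(y, x) \<notin> graph_of S"
    unfolding asms_of_graph_def by blast
  then show "s \<in> S"
  proof cases
    case 1
    then show ?thesis unfolding graph_of_def by simp
  next
    case 2
    then obtain a where "a \<in> pair_asms x y" "As a \<in> S"
      using assms unfolding at_least_one_per_pair_def by blast
    then show ?thesis using 2 unfolding pair_asms_def graph_of_def by auto
  qed
qed

lemma asms_of_graph_graph_of:
  assumes "stable (D_dag V) S"
  shows "asms_of_graph V (graph_of S) = S"
  using assms subset_asms_of_graph_graph_of asms_of_graph_graph_of_subset
  unfolding stable_D_dag_iff by blast

lemma graph_of_stable: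
  assumes "stable (D_dag V) S"
  shows "graph_of S \<subseteq> V \<times> V" "acyclic (graph_of S)"
  using assms graph_of_offdiag unfolding stable_D_dag_iff by auto

lemma preferred_D_dag_iff_stable: "preferred (D_dag V) S \<longleftrightarrow> stable (D_dag V) S"
proof
  assume pref: "preferred (D_dag V) S"
  then have S: "S \<subseteq> asms (D_dag V)" "conflict_free (D_dag V) S"
    unfolding preferred_def complete_def admissible_def by blast+
  then have "at_most_one_per_pair V S" "acyclic (graph_of S)"
    using conflict_free_D_dag_iff by blast+
  define S' where "S' = asms_of_graph V (graph_of S)"
  have "graph_of S \<subseteq> V \<times> V" using graph_of_offdiag[OF S(1)] by auto
  then have "stable (D_dag V) S'"
    unfolding S'_def using \<open>acyclic (graph_of S)\<close> by (rule stable_asms_of_graph)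
  moreover have "S \<subseteq> S'"
    unfolding S'_def using subset_asms_of_graph_graph_of S(1) \<open>at_most_one_per_pair V S\<close> .
  ultimately have "S = S'"
    using pref stable_imp_complete unfolding preferred_def by blast
  with \<open>stable (D_dag V) S'\<close> show "stable (D_dag V) S" by simp
qed (rule stable_imp_preferred)

lemma bij_betw_graph_of_stable_D_dag:
  "bij_betw graph_of {S. stable (D_dag V) S} {E. E \<subseteq> V \<times> V \<and> acyclic E}"
proof (rule bij_betw_byWitness[where f' = "asms_of_graph V"])
  show "\<forall>S\<in>{S. stable (D_dag V) S}. asms_of_graph V (graph_of S) = S"
    using asms_of_graph_graph_of by blast
  show "\<forall>E\<in>{E. E \<subseteq> V \<times> V \<and> acyclic E}. graph_of (asms_of_graph V E) = E"
    by simp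
  show "graph_of ` {S. stable (D_dag V) S} \<subseteq> {E. E \<subseteq> V \<times> V \<and> acyclic E}"
    using graph_of_stable by blast
  show "asms_of_graph V ` {E. E \<subseteq> V \<times> V \<and> acyclic E} \<subseteq> {S. stable (D_dag V) S}"
    using stable_asms_of_graph by blast
qed

theorem corollary1:
  fixes V :: "'v set"
    and \<sigma> :: "'v dag_sent aba \<Rightarrow> 'v dag_sent set \<Rightarrow> bool"
  assumes "finite V"
    and "\<sigma> \<in> {preferred, stable}"
  shows "bij_betw graph_of {S. \<sigma> (D_dag V) S} {E. E \<subseteq> V \<times> V \<and> acyclic E}"
proof -
  have "{S. \<sigma> (D_dag V) S} = {S. stable (D_dag V) S}"
    using assms(2) preferred_D_dag_iff_stable by auto
  then show ?thesis using bij_betw_graph_of_stable_D_dag by simp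
qed

end
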